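(* There is no well-behaved real-measure of $\mathbb N^{\mathbb N}$; that is, there is no function $F:\mathbb N^{\mathbb N}\to\mathbb R$ such that (1) for all $f,g:\mathbb N\to\mathbb N$, $f\succ g$ implies $F(f)>F(g)$, and (2) for every $r\in\mathbb R$ there is $f:\mathbb N\to\mathbb N$ with $F(f)>r$.
   Context: $\mathbb N^{\mathbb N}$ denotes the set of all functions $\mathbb N\to\mathbb N$. For $f,g:\mathbb N\to\mathbb N$, write $f\succ g$ if there is $n_0\in\mathbb N$ with $f(n)>g(n)$ for all $n>n_0$. *)

theory Defs
  imports Complex_Main
begin

definition eventually_dominates :: "(nat \<Rightarrow> nat) \<Rightarrow> (nat \<Rightarrow> nat) \<Rightarrow> bool" where
  "eventually_dominates f g \<longleftrightarrow> (\<exists>n0::nat. \<forall>n>n0. f n > g n)"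

end

theory Submission
  imports Defs
begin

text \<open>If F were strictly monotone for eventual domination and unbounded, pick h k with
F (h k) > k. The diagonal bound g m = 1 + (\<Sum>k\<le>m. h k m) dominates every h k, so F g > k
for all k, which no real number satisfies.\<close>

lemma countable_family_eventually_dominated:
  fixes h :: "nat \<Rightarrow> nat \<Rightarrow> nat"
  obtains g where "\<And>k. eventually_dominates g (h k)"
proof
  define g where "g m = Suc (\<Sum>k\<le>m. h k m)" for m
  show "eventually_dominates g (h k)" for k
    unfolding eventually_dominates_def
  proof (intro exI allI impI)
    fix n assume "n > k"
    then have "h k n \<le> (\<Sum>j\<le>n. h j n)"
      by (intro member_le_sum) auto
    then show "g n > h k n"
      unfolding g_def by simp
  qed
qed

theorem mainTheorem7:
  shows "\<not> (\<exists>F :: (nat \<Rightarrow> nat) \<Rightarrow> real.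
             (\<forall>f g. eventually_dominates f g \<longrightarrow> F f > F g) \<and>
             (\<forall>r::real. \<exists>f. F f > r))"
proof
  assume "\<exists>F :: (nat \<Rightarrow> nat) \<Rightarrow> real.
             (\<forall>f g. eventually_dominates f g \<longrightarrow> F f > F g) \<and>
             (\<forall>r::real. \<exists>f. F f > r)"
  then obtain F :: "(nat \<Rightarrow> nat) \<Rightarrow> real" where
    mono: "\<And>f g. eventually_dominates f g \<Longrightarrow> F f > F g" and
    unbounded: "\<And>r. \<exists>f. F f > r"
    by blast
  obtain h where h: "\<And>k::nat. F (h k) > real k"
  proof -
    have "\<forall>k::nat. \<exists>f. F f > real k"
      using unbounded by blast
    then show ?thesis
      using that by metis
  qed
  obtain g where g: "\<And>k. eventually_dominates g (h k)"
    using countable_family_eventually_dominated by blast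
  have "F g > real k" for k
    using mono[OF g[of k]] h[of k] by linarith
  from this[of "nat \<lceil>F g\<rceil>"] show False
    by linarith
qed

end
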